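(* For any sample $(x,u)$, generative parameters $\theta$ and inference parameters $\phi$, the function $\alpha\mapsto \mathrm{ELBO}_{\theta,\phi}(\alpha;x,u)$ is concave on $[0,1]$. It is strictly concave on $[0,1]$ if and only if $q_\phi(z|x)\neq q_\phi(z|x,u)$ on a set of $z$ of positive Lebesgue measure.
   Context: Observations $x\in\mathbb{R}^{d_X}$, covariates $u\in\mathbb{R}^{d_U}$, latents $z\in\mathbb{R}^{d_Z}$, $d_Z<d_X$. Generative parameters $\theta=(f,T,\lambda)$: mixing function $f:\mathbb{R}^{d_Z}\to\mathbb{R}^{d_X}$, label prior density $p_{T,\lambda}(z|u)=\prod_{i=1}^{d_Z}\exp(\lambda_i(u)\cdot T_i(z_i)-A(u)+B(z_i))$ (conditionally factorial exponential family with known $A,B$), decoder density $p_f(x|z)=p_\epsilon(x-f(z))$ for a fixed noise density $p_\epsilon$. Inference parameters $\phi$ determine an encoder density $q_\phi(z|x)$ and a posterior density $q_\phi(z|x,u)$ on $\mathbb{R}^{d_Z}$. For $\alpha\in[0,1]$, with $m_\alpha=\alpha q_\phi(\cdot|x)+(1-\alpha)q_\phi(\cdot|x,u)$, $\mathrm{ELBO}_{\theta,\phi}(\alpha;x,u)=\mathbb{E}_{z\sim m_\alpha}\log p_f(x|z)-\mathcal{D}_{\mathrm{KL}}(m_\alpha\|p_{T,\lambda}(\cdot|u))$. All expectations and divergences appearing are assumed finite. *)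

theory Defs
  imports "HOL-Analysis.Analysis"
begin

definition strict_concave_on :: "'a::real_vector set \<Rightarrow> ('a \<Rightarrow> real) \<Rightarrow> bool" where
  "strict_concave_on S F \<longleftrightarrow> convex S \<and>
     (\<forall>a\<in>S. \<forall>b\<in>S. a \<noteq> b \<longrightarrow> (\<forall>t. 0 < t \<and> t < 1 \<longrightarrow>
        F ((1 - t) *\<^sub>R a + t *\<^sub>R b) > (1 - t) * F a + t * F b))"

definition label_prior ::
  "('z::finite \<Rightarrow> real \<Rightarrow> real^'k) \<Rightarrow> ('z \<Rightarrow> real^'u \<Rightarrow> real^'k)
   \<Rightarrow> (real^'u \<Rightarrow> real) \<Rightarrow> (real \<Rightarrow> real) \<Rightarrow> real^'u \<Rightarrow> real^'z \<Rightarrow> real" where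
  "label_prior T lam A B u z =
     (\<Prod>i\<in>UNIV. exp (lam i u \<bullet> T i (z $ i) - A u + B (z $ i)))"

definition decoder :: "(real^'x \<Rightarrow> real) \<Rightarrow> (real^'z \<Rightarrow> real^'x) \<Rightarrow> real^'x \<Rightarrow> real^'z \<Rightarrow> real" where
  "decoder p_eps f x z = p_eps (x - f z)"

definition mixture :: "real \<Rightarrow> ('a \<Rightarrow> real) \<Rightarrow> ('a \<Rightarrow> real) \<Rightarrow> 'a \<Rightarrow> real" where
  "mixture \<alpha> q1 q2 z = \<alpha> * q1 z + (1 - \<alpha>) * q2 z"

definition expect_dens :: "('a::euclidean_space \<Rightarrow> real) \<Rightarrow> ('a \<Rightarrow> real) \<Rightarrow> real" where
  "expect_dens m g = (\<integral>z. m z * g z \<partial>lborel)"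

definition kl_integrand :: "('a \<Rightarrow> real) \<Rightarrow> ('a \<Rightarrow> real) \<Rightarrow> 'a \<Rightarrow> real" where
  "kl_integrand m p z = (if m z = 0 then 0 else m z * ln (m z / p z))"

definition kl_dens :: "('a::euclidean_space \<Rightarrow> real) \<Rightarrow> ('a \<Rightarrow> real) \<Rightarrow> real" where
  "kl_dens m p = (\<integral>z. kl_integrand m p z \<partial>lborel)"

definition ELBO ::
  "(real^'x \<Rightarrow> real) \<Rightarrow> (real^'z::finite \<Rightarrow> real^'x) \<Rightarrow> ('z \<Rightarrow> real \<Rightarrow> real^'k)
   \<Rightarrow> ('z \<Rightarrow> real^'u \<Rightarrow> real^'k) \<Rightarrow> (real^'u \<Rightarrow> real) \<Rightarrow> (real \<Rightarrow> real)
   \<Rightarrow> (real^'x \<Rightarrow> real^'z \<Rightarrow> real) \<Rightarrow> (real^'x \<Rightarrow> real^'u \<Rightarrow> real^'z \<Rightarrow> real)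
   \<Rightarrow> real \<Rightarrow> real^'x \<Rightarrow> real^'u \<Rightarrow> real" where
  "ELBO p_eps f T lam A B qenc qpost \<alpha> x u =
     expect_dens (mixture \<alpha> (qenc x) (qpost x u)) (\<lambda>z. ln (decoder p_eps f x z))
     - kl_dens (mixture \<alpha> (qenc x) (qpost x u)) (label_prior T lam A B u)"

end

theory Submission
  imports Defs
begin

text \<open>The mixture density m_alpha is affine in alpha, so the expected log-likelihood term of
  the ELBO is affine in alpha, while the KL term is the integral of s \<mapsto> s ln (s / p(z)) evaluated
  at m_alpha(z). As p(z) > 0 this function is strictly convex on [0, \<infinity>), so the Jensen gap of
  the KL term along [0, 1] is the integral of a nonnegative function that is positive exactly
  where q(z|x) \<noteq> q(z|x,u); it vanishes identically iff the two densities agree almost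
  everywhere.\<close>

definition strict_convex_on :: "'a::real_vector set \<Rightarrow> ('a \<Rightarrow> real) \<Rightarrow> bool" where
  "strict_convex_on S F \<longleftrightarrow> convex S \<and>
     (\<forall>a\<in>S. \<forall>b\<in>S. a \<noteq> b \<longrightarrow> (\<forall>t. 0 < t \<and> t < 1 \<longrightarrow>
        F ((1 - t) *\<^sub>R a + t *\<^sub>R b) < (1 - t) * F a + t * F b))"

lemma strict_convex_onD:
  assumes "strict_convex_on S F" "a \<in> S" "b \<in> S" "a \<noteq> b" "0 < t" "t < 1"
  shows "F ((1 - t) *\<^sub>R a + t *\<^sub>R b) < (1 - t) * F a + t * F b"
  using assms by (simp add: strict_convex_on_def)

lemma strict_convex_on_imp_convex_on:
  assumes "strict_convex_on S F"
  shows "convex_on S F"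
proof (rule convex_onI)
  show "convex S"
    using assms by (simp add: strict_convex_on_def)
  fix t :: real and x y
  assume "0 < t" "t < 1" "x \<in> S" "y \<in> S"
  then show "F ((1 - t) *\<^sub>R x + t *\<^sub>R y) \<le> (1 - t) * F x + t * F y"
    using assms unfolding strict_convex_on_def
    by (cases "x = y") (auto simp: algebra_simps intro: less_imp_le)
qed

lemma strict_concave_on_affine_diff_iff:
  fixes S :: "real set" and c0 c1 :: real
  shows "strict_concave_on S (\<lambda>\<alpha>. \<alpha> * c1 + (1 - \<alpha>) * c0 - K \<alpha>) \<longleftrightarrow> strict_convex_on S K"
proof -
  have affine: "((1 - t) * a + t * b) * c1 + (1 - ((1 - t) * a + t * b)) * c0
      = (1 - t) * (a * c1 + (1 - a) * c0) + t * (b * c1 + (1 - b) * c0)" for a b t :: real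
    by (simp add: algebra_simps)
  show ?thesis
    unfolding strict_concave_on_def strict_convex_on_def by (simp add: affine algebra_simps)
qed

lemma concave_on_affine_diff:
  fixes S :: "real set" and c0 c1 :: real
  assumes "convex_on S K"
  shows "concave_on S (\<lambda>\<alpha>. \<alpha> * c1 + (1 - \<alpha>) * c0 - K \<alpha>)"
proof (rule concave_on_diff[OF _ assms])
  have "convex S"
    using assms by (rule convex_on_imp_convex)
  then show "concave_on S (\<lambda>\<alpha>. \<alpha> * c1 + (1 - \<alpha>) * c0)"
    by (intro concave_on_add concave_on_cmul)
      (simp_all add: concave_on_iff algebra_simps flip: distrib_right)
qed

definition rel_entr :: "real \<Rightarrow> real \<Rightarrow> real" where
  "rel_entr s p = (if s = 0 then 0 else s * ln (s / p))"

lemma rel_entr_gt_diff: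
  assumes "0 \<le> s" "0 < m" "s \<noteq> m"
  shows "s - m < rel_entr s m"
proof (cases "s = 0")
  case False
  then have "ln m - ln s < (m - s) / s"
    using assms by (intro ln_diff_less) auto
  then show ?thesis
    using assms False by (simp add: rel_entr_def ln_div field_simps)
qed (use assms in \<open>simp add: rel_entr_def\<close>)

lemma rel_entr_change_base:
  assumes "0 \<le> s" "0 < m" "0 < p"
  shows "rel_entr s p = rel_entr s m + s * ln (m / p)"
  using assms by (auto simp: rel_entr_def ln_div algebra_simps)

lemma strict_convex_on_rel_entr:
  assumes p: "0 < p"
  shows "strict_convex_on {0..} (\<lambda>s. rel_entr s p)"
  unfolding strict_convex_on_def
proof (intro conjI ballI allI impI)
  show "convex {0::real..}"
    by (rule convex_real_interval)
  fix a b t :: real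
  assume a: "a \<in> {0..}" and b: "b \<in> {0..}" and "a \<noteq> b" and t: "0 < t \<and> t < 1"
  define m where "m = (1 - t) * a + t * b"
  have "0 < m"
    using a b t \<open>a \<noteq> b\<close> unfolding m_def
    by (smt (verit) atLeast_iff mult_pos_pos mult_nonneg_nonneg)
  have "a - m = t * (a - b)" "b - m = (1 - t) * (b - a)"
    by (simp_all add: m_def algebra_simps)
  then have "a \<noteq> m" "b \<noteq> m"
    using t \<open>a \<noteq> b\<close> by auto
  txt \<open>Rebased at the midpoint m, the Jensen gap is (1 - t) rel_entr a m + t rel_entr b m,
    which dominates (1 - t) (a - m) + t (b - m) = 0.\<close>
  have "0 = (1 - t) * (a - m) + t * (b - m)"
    by (simp add: m_def algebra_simps)
  also have "\<dots> < (1 - t) * rel_entr a m + t * rel_entr b m"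
    using a b t \<open>0 < m\<close> \<open>a \<noteq> m\<close> \<open>b \<noteq> m\<close>
    by (intro add_strict_mono mult_strict_left_mono rel_entr_gt_diff) auto
  finally have "m * ln (m / p) < (1 - t) * rel_entr a p + t * rel_entr b p"
    using a b \<open>0 < m\<close> p
    by (simp add: rel_entr_change_base[of _ m p] m_def algebra_simps)
  then show "rel_entr ((1 - t) *\<^sub>R a + t *\<^sub>R b) p < (1 - t) * rel_entr a p + t * rel_entr b p"
    using \<open>0 < m\<close> p by (simp add: rel_entr_def m_def)
qed

lemma mixture_0 [simp]: "mixture 0 q r = r"
  and mixture_1 [simp]: "mixture 1 q r = q"
  by (simp_all add: mixture_def fun_eq_iff)

lemma mixture_convex_comb:
  "mixture ((1 - t) * a + t * b) q r z = (1 - t) * mixture a q r z + t * mixture b q r z"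
  by (simp add: mixture_def algebra_simps)

lemma mixture_eq_iff:
  assumes "a \<noteq> b"
  shows "mixture a q r z = mixture b q r z \<longleftrightarrow> q z = r z"
proof -
  have "mixture a q r z - mixture b q r z = (a - b) * (q z - r z)"
    by (simp add: mixture_def algebra_simps)
  then show ?thesis
    using assms by auto
qed

lemma mixture_in_convex:
  assumes "convex D" "\<alpha> \<in> {0..1}" "q z \<in> D" "r z \<in> D"
  shows "mixture \<alpha> q r z \<in> D"
  using convexD[OF assms(1,3,4), of \<alpha> "1 - \<alpha>"] assms(2) by (simp add: mixture_def)

lemma expect_dens_mixture:
  assumes "integrable lborel (\<lambda>z. q z * g z)" "integrable lborel (\<lambda>z. r z * g z)"
  shows "expect_dens (mixture \<alpha> q r) g = \<alpha> * expect_dens q g + (1 - \<alpha>) * expect_dens r g"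
proof -
  have "expect_dens (mixture \<alpha> q r) g = (\<integral>z. \<alpha> * (q z * g z) + (1 - \<alpha>) * (r z * g z) \<partial>lborel)"
    unfolding expect_dens_def mixture_def by (simp add: algebra_simps)
  also have "\<dots> = \<alpha> * expect_dens q g + (1 - \<alpha>) * expect_dens r g"
    using assms unfolding expect_dens_def by simp
  finally show ?thesis .
qed

lemma integral_mixture_jensen_gap:
  fixes M :: "'a measure" and g :: "'a \<Rightarrow> real \<Rightarrow> real"
  assumes conv: "\<And>z. convex_on D (g z)" and range: "\<And>z. q z \<in> D" "\<And>z. r z \<in> D"
    and ab: "a \<in> {0..1}" "b \<in> {0..1}" and t: "t \<in> {0..1}"
    and integrable_mixture: "integrable M (\<lambda>z. g z (mixture a q r z))"
      "integrable M (\<lambda>z. g z (mixture b q r z))"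
      "integrable M (\<lambda>z. g z (mixture ((1 - t) * a + t * b) q r z))"
  defines "gap z \<equiv> (1 - t) * g z (mixture a q r z) + t * g z (mixture b q r z)
      - g z (mixture ((1 - t) * a + t * b) q r z)"
  shows "(1 - t) * (\<integral>z. g z (mixture a q r z) \<partial>M) + t * (\<integral>z. g z (mixture b q r z) \<partial>M)
      - (\<integral>z. g z (mixture ((1 - t) * a + t * b) q r z) \<partial>M) = integral\<^sup>L M gap"
    and "integrable M gap"
    and "0 \<le> gap z"
proof -
  show "(1 - t) * (\<integral>z. g z (mixture a q r z) \<partial>M) + t * (\<integral>z. g z (mixture b q r z) \<partial>M)
      - (\<integral>z. g z (mixture ((1 - t) * a + t * b) q r z) \<partial>M) = integral\<^sup>L M gap"
    and "integrable M gap"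
    unfolding gap_def using integrable_mixture by simp_all
  have "convex D"
    using conv by (rule convex_on_imp_convex)
  then have "mixture \<alpha> q r z \<in> D" if "\<alpha> \<in> {0..1}" for \<alpha>
    using that range by (rule mixture_in_convex)
  then show "0 \<le> gap z"
    using convex_onD[OF conv, of t "mixture a q r z" "mixture b q r z"] t ab
    by (simp add: gap_def mixture_convex_comb)
qed

lemma convex_on_integral_mixture:
  fixes M :: "'a measure" and g :: "'a \<Rightarrow> real \<Rightarrow> real"
  assumes conv: "\<And>z. convex_on D (g z)" and range: "\<And>z. q z \<in> D" "\<And>z. r z \<in> D"
    and integrable_mixture: "\<And>\<alpha>. \<alpha> \<in> {0..1} \<Longrightarrow> integrable M (\<lambda>z. g z (mixture \<alpha> q r z))"
  shows "convex_on {0..1} (\<lambda>\<alpha>. \<integral>z. g z (mixture \<alpha> q r z) \<partial>M)"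
proof (rule convex_onI)
  let ?I = "\<lambda>\<alpha>. \<integral>z. g z (mixture \<alpha> q r z) \<partial>M"
  fix t a b :: real
  assume "0 < t" "t < 1" and ab: "a \<in> {0..1}" "b \<in> {0..1}"
  then have t: "t \<in> {0..1}"
    by simp
  have "(1 - t) * a + t * b \<in> {0..1}"
    using convexD[OF convex_real_interval(5) ab, of "1 - t" t] t by simp
  note gap = integral_mixture_jensen_gap[OF conv range ab t
      integrable_mixture[OF ab(1)] integrable_mixture[OF ab(2)] integrable_mixture[OF this]]
  have "0 \<le> (1 - t) * ?I a + t * ?I b - ?I ((1 - t) * a + t * b)"
    unfolding gap(1) by (intro Bochner_Integration.integral_nonneg gap(3))
  then show "?I ((1 - t) *\<^sub>R a + t *\<^sub>R b) \<le> (1 - t) * ?I a + t * ?I b"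
    by simp
qed (rule convex_real_interval)

lemma integral_mixture_strict_jensen:
  fixes M :: "'a measure" and g :: "'a \<Rightarrow> real \<Rightarrow> real"
  assumes meas: "q \<in> borel_measurable M" "r \<in> borel_measurable M"
    and pos: "0 < emeasure M {z \<in> space M. q z \<noteq> r z}"
    and strict: "\<And>z. strict_convex_on D (g z)" and range: "\<And>z. q z \<in> D" "\<And>z. r z \<in> D"
    and ab: "a \<in> {0..1}" "b \<in> {0..1}" "a \<noteq> b" and t: "0 < t" "t < 1"
    and integrable_mixture: "integrable M (\<lambda>z. g z (mixture a q r z))"
      "integrable M (\<lambda>z. g z (mixture b q r z))"
      "integrable M (\<lambda>z. g z (mixture ((1 - t) * a + t * b) q r z))"
  shows "(\<integral>z. g z (mixture ((1 - t) * a + t * b) q r z) \<partial>M)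
    < (1 - t) * (\<integral>z. g z (mixture a q r z) \<partial>M) + t * (\<integral>z. g z (mixture b q r z) \<partial>M)"
proof -
  have conv: "convex_on D (g z)" for z
    using strict by (rule strict_convex_on_imp_convex_on)
  have "t \<in> {0..1}"
    using t by simp
  note gap = integral_mixture_jensen_gap[OF conv range ab(1,2) this integrable_mixture]
  have "convex D"
    using conv by (rule convex_on_imp_convex)
  then have in_D: "mixture \<alpha> q r z \<in> D" if "\<alpha> \<in> {0..1}" for \<alpha> z
    using that range by (rule mixture_in_convex)
  have gap_pos: "g z (mixture ((1 - t) * a + t * b) q r z)
      < (1 - t) * g z (mixture a q r z) + t * g z (mixture b q r z)" if "q z \<noteq> r z" for z
    using strict_convex_onD[OF strict[of z] in_D[OF ab(1), of z] in_D[OF ab(2), of z]] t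
      mixture_eq_iff[OF \<open>a \<noteq> b\<close>, of q r z] that
    by (simp add: mixture_convex_comb)
  have "{z \<in> space M. q z \<noteq> r z} \<in> sets M"
    using meas by measurable
  with pos have "\<not> (AE z in M. q z = r z)"
    by (subst AE_iff_measurable) auto
  moreover have "AE z in M. q z = r z"
    if "AE z in M. (1 - t) * g z (mixture a q r z) + t * g z (mixture b q r z)
      - g z (mixture ((1 - t) * a + t * b) q r z) = 0"
    using that by eventually_elim (use gap_pos in fastforce)
  ultimately have "\<not> (AE z in M. (1 - t) * g z (mixture a q r z) + t * g z (mixture b q r z)
      - g z (mixture ((1 - t) * a + t * b) q r z) = 0)"
    by blast
  then have "0 < (1 - t) * (\<integral>z. g z (mixture a q r z) \<partial>M) + t * (\<integral>z. g z (mixture b q r z) \<partial>M)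
      - (\<integral>z. g z (mixture ((1 - t) * a + t * b) q r z) \<partial>M)"
    using t gap(3) integral_nonneg_eq_0_iff_AE[OF gap(2)]
    by (simp add: gap(1) order_less_le)
  then show ?thesis
    by simp
qed

lemma strict_convex_on_integral_mixture_iff:
  fixes M :: "'a measure" and g :: "'a \<Rightarrow> real \<Rightarrow> real"
  assumes meas: "q \<in> borel_measurable M" "r \<in> borel_measurable M"
    and strict: "\<And>z. strict_convex_on D (g z)" and range: "\<And>z. q z \<in> D" "\<And>z. r z \<in> D"
    and integrable_mixture: "\<And>\<alpha>. \<alpha> \<in> {0..1} \<Longrightarrow> integrable M (\<lambda>z. g z (mixture \<alpha> q r z))"
  shows "strict_convex_on {0..1} (\<lambda>\<alpha>. \<integral>z. g z (mixture \<alpha> q r z) \<partial>M)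
    \<longleftrightarrow> 0 < emeasure M {z \<in> space M. q z \<noteq> r z}"
proof
  let ?I = "\<lambda>\<alpha>. \<integral>z. g z (mixture \<alpha> q r z) \<partial>M"
  show "0 < emeasure M {z \<in> space M. q z \<noteq> r z}" if "strict_convex_on {0..1} ?I"
  proof (rule ccontr)
    assume "\<not> ?thesis"
    moreover have "{z \<in> space M. q z \<noteq> r z} \<in> sets M"
      using meas by measurable
    ultimately have "AE z in M. q z = r z"
      by (subst AE_iff_measurable) (auto simp: zero_less_iff_neq_zero)
    then have "AE z in M. g z (mixture \<alpha> q r z) = g z (mixture 0 q r z)" for \<alpha>
      by eventually_elim (simp add: mixture_def algebra_simps)
    then have const: "?I \<alpha> = ?I 0" if "\<alpha> \<in> {0..1}" for \<alpha>
      using integrable_mixture[OF that] integrable_mixture[of 0] by (intro integral_cong_AE) auto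
    have "?I ((1 - 1/2) *\<^sub>R 0 + (1/2) *\<^sub>R 1) < (1 - 1/2) * ?I 0 + (1/2) * ?I 1"
      using \<open>strict_convex_on {0..1} ?I\<close> by (rule strict_convex_onD) auto
    then show False
      using const[of 1] const[of "1/2"] by simp
  qed
  show "strict_convex_on {0..1} ?I" if pos: "0 < emeasure M {z \<in> space M. q z \<noteq> r z}"
    unfolding strict_convex_on_def
  proof (intro conjI ballI allI impI)
    fix a b t :: real
    assume ab: "a \<in> {0..1}" "b \<in> {0..1}" "a \<noteq> b" and "0 < t \<and> t < 1"
    then have "(1 - t) * a + t * b \<in> {0..1}"
      using convexD[OF convex_real_interval(5) ab(1,2), of "1 - t" t] by simp
    then show "?I ((1 - t) *\<^sub>R a + t *\<^sub>R b) < (1 - t) * ?I a + t * ?I b"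
      using integral_mixture_strict_jensen[OF meas pos strict range ab _ _
          integrable_mixture[OF ab(1)] integrable_mixture[OF ab(2)]] \<open>0 < t \<and> t < 1\<close>
      by (simp add: integrable_mixture)
  qed (rule convex_real_interval)
qed

lemma label_prior_pos: "0 < label_prior T lam A B u z"
  unfolding label_prior_def by (intro prod_pos) simp

lemma kl_integrand_eq_rel_entr: "kl_integrand m p = (\<lambda>z. rel_entr (m z) (p z))"
  by (simp add: kl_integrand_def rel_entr_def fun_eq_iff)

theorem proposition6:
  fixes p_eps :: "real^'x \<Rightarrow> real"
    and f :: "real^'z \<Rightarrow> real^'x"
    and T :: "'z \<Rightarrow> real \<Rightarrow> real^'k"
    and lam :: "'z \<Rightarrow> real^'u \<Rightarrow> real^'k"
    and A :: "real^'u \<Rightarrow> real"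
    and B :: "real \<Rightarrow> real"
    and qenc :: "'phi \<Rightarrow> real^'x \<Rightarrow> real^'z \<Rightarrow> real"
    and qpost :: "'phi \<Rightarrow> real^'x \<Rightarrow> real^'u \<Rightarrow> real^'z \<Rightarrow> real"
    and \<phi> :: 'phi
    and x :: "real^'x" and u :: "real^'u"
  assumes dim: "CARD('z) < CARD('x)"
    (* p_eps is a probability density on R^{d_X} *)
    and eps_meas: "p_eps \<in> borel_measurable lborel"
    and eps_nonneg: "\<And>y. p_eps y \<ge> 0"
    and eps_int: "integrable lborel p_eps" and eps_one: "(\<integral>y. p_eps y \<partial>lborel) = 1"
    (* the label prior is a probability density on R^{d_Z} for every u *)
    and prior_meas: "\<And>u'. label_prior T lam A B u' \<in> borel_measurable lborel"
    and prior_int: "\<And>u'. integrable lborel (label_prior T lam A B u')"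
    and prior_one: "\<And>u'. (\<integral>z. label_prior T lam A B u' z \<partial>lborel) = 1"
    (* encoder q_phi(z|x) and posterior q_phi(z|x,u) are probability densities *)
    and enc_meas: "\<And>x'. qenc \<phi> x' \<in> borel_measurable lborel"
    and enc_nonneg: "\<And>x' z. qenc \<phi> x' z \<ge> 0"
    and enc_int: "\<And>x'. integrable lborel (qenc \<phi> x')"
    and enc_one: "\<And>x'. (\<integral>z. qenc \<phi> x' z \<partial>lborel) = 1"
    and post_meas: "\<And>x' u'. qpost \<phi> x' u' \<in> borel_measurable lborel"
    and post_nonneg: "\<And>x' u' z. qpost \<phi> x' u' z \<ge> 0"
    and post_int: "\<And>x' u'. integrable lborel (qpost \<phi> x' u')"
    and post_one: "\<And>x' u'. (\<integral>z. qpost \<phi> x' u' z \<partial>lborel) = 1"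
    (* all expectations and divergences appearing are finite *)
    and fin_exp: "\<And>\<alpha>. \<alpha> \<in> {0..1} \<Longrightarrow>
       integrable lborel (\<lambda>z. mixture \<alpha> (qenc \<phi> x) (qpost \<phi> x u) z * ln (decoder p_eps f x z))"
    and fin_kl: "\<And>\<alpha>. \<alpha> \<in> {0..1} \<Longrightarrow>
       integrable lborel (kl_integrand (mixture \<alpha> (qenc \<phi> x) (qpost \<phi> x u)) (label_prior T lam A B u))"
  shows "concave_on {0..1} (\<lambda>\<alpha>. ELBO p_eps f T lam A B (qenc \<phi>) (qpost \<phi>) \<alpha> x u)
    \<and> (strict_concave_on {0..1} (\<lambda>\<alpha>. ELBO p_eps f T lam A B (qenc \<phi>) (qpost \<phi>) \<alpha> x u)
        \<longleftrightarrow> emeasure lborel {z. qenc \<phi> x z \<noteq> qpost \<phi> x u z} > 0)"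
proof -
  txt \<open>Besides the finiteness hypotheses, only positivity of the prior and measurability and
    nonnegativity of the two densities are needed; normalisation and the dimension bound are not.\<close>
  let ?q = "qenc \<phi> x" and ?r = "qpost \<phi> x u" and ?p = "label_prior T lam A B u"
  let ?L = "\<lambda>z. ln (decoder p_eps f x z)"
  let ?K = "\<lambda>\<alpha>. \<integral>z. rel_entr (mixture \<alpha> ?q ?r z) (?p z) \<partial>lborel"
  have ELBO_eq: "ELBO p_eps f T lam A B (qenc \<phi>) (qpost \<phi>) \<alpha> x u
      = \<alpha> * expect_dens ?q ?L + (1 - \<alpha>) * expect_dens ?r ?L - ?K \<alpha>" for \<alpha>
    using fin_exp[of 1] fin_exp[of 0]
    by (simp add: ELBO_def kl_dens_def kl_integrand_eq_rel_entr expect_dens_mixture)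
  have strict: "strict_convex_on {0..} (\<lambda>s. rel_entr s (?p z))" for z
    using label_prior_pos by (rule strict_convex_on_rel_entr)
  have range: "?q z \<in> {0..}" "?r z \<in> {0..}" for z
    using enc_nonneg post_nonneg by simp_all
  have integrable_mixture: "integrable lborel (\<lambda>z. rel_entr (mixture \<alpha> ?q ?r z) (?p z))"
    if "\<alpha> \<in> {0..1}" for \<alpha>
    using fin_kl[OF that] by (simp add: kl_integrand_eq_rel_entr)
  have "convex_on {0..1} ?K"
    using strict_convex_on_imp_convex_on[OF strict] range integrable_mixture
    by (rule convex_on_integral_mixture)
  moreover have "strict_convex_on {0..1} ?K \<longleftrightarrow> 0 < emeasure lborel {z. ?q z \<noteq> ?r z}"
    using strict_convex_on_integral_mixture_iff[OF enc_meas post_meas strict range integrable_mixture]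
    by simp
  ultimately show ?thesis
    unfolding ELBO_eq by (simp add: concave_on_affine_diff strict_concave_on_affine_diff_iff)
qed

end
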